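(* Let $N\ge1$ and let $f=|0,\dots,N-1|$, $g=|0,\dots,N-2,N|$ be Casoratians of $\boldsymbol\psi$ (see context), as functions of $(n,m,\alpha,\beta)$. Then (GD-4 (C-3) bilinear form) $$(p-a)\widetilde f\dot{\check f}-(p-b)f\widetilde{\dot{\check f}}-(b-a)\dot f\widetilde{\check f}=0,\qquad (q-a)\widehat f\dot{\check f}-(q-b)f\widehat{\dot{\check f}}-(b-a)\dot f\widehat{\check f}=0,$$ $$f(a\widetilde{\check f}+\widetilde{\check g})+(p-a)\widetilde f\check f-(pf+g)\widetilde{\check f}=0,\qquad f(a\widehat{\check f}+\widehat{\check g})+(q-a)\widehat f\check f-(qf+g)\widehat{\check f}=0,$$ $$\widetilde f(p\dot f+\dot g)-(p-b)f\widetilde{\dot f}-(b\widetilde f+\widetilde g)\dot f=0,\qquad \widehat f(q\dot f+\dot g)-(q-b)f\widehat{\dot f}-(b\widehat f+\widehat g)\dot f=0,$$ $$(p-b)\widetilde{\dot f}\widehat f-(q-b)\widehat{\dot f}\widetilde f-(p-q)\widehat{\widetilde f}\dot f=0,$$ $$(a\check f+\check g)\widehat{\widetilde{\dot f}}-\check f(\widehat{\widetilde{\dot g}}-b\widehat{\widetilde{\dot f}})-\frac{p_b\,\widehat{\dot f}\widetilde{\check f}}{(p-q)(p-a)}+\frac{q_b\,\widetilde{\dot f}\widehat{\check f}}{(p-q)(q-a)}+(p+q-\alpha_3)\check f\widehat{\widetilde{\dot f}}-\frac{a_b}{(p-a)(q-a)}f\widehat{\widetilde{\dot{\check f}}}=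0.$$
   Context: Fix $\alpha_1,\alpha_2,\alpha_3\in\mathbb C$, $G(\omega,k)=\omega^4-k^4+\alpha_3(\omega^3-k^3)+\alpha_2(\omega^2-k^2)+\alpha_1(\omega-k)$. Let $p,q,a,b\in\mathbb C$ be pairwise distinct, $p_b=G(-p,-b)/(p-b)$, $q_b=G(-q,-b)/(q-b)$, $a_b=G(-a,-b)/(a-b)$. Fix $N\ge1$, $k_1,\dots,k_N\in\mathbb C$; for each $s$ let $\omega_1(k_s),\dots,\omega_4(k_s)$ be the four roots in $\omega$ of $G(-\omega,-k_s)=0$, with $\omega_4(k_s)=k_s$. For constants $\rho^{(0)}_{j,s}$ let $\psi_s(n,m,\alpha,\beta,l)=\sum_{j=1}^4\rho^{(0)}_{j,s}(-\omega_j(k_s))^l(p-\omega_j(k_s))^n(q-\omega_j(k_s))^m(a-\omega_j(k_s))^\alpha(b-\omega_j(k_s))^\beta$ and $\boldsymbol\psi(l)=(\psi_1,\dots,\psi_N)^T$. Casoratian notation: $|l_1,\dots,l_N|=\det(\boldsymbol\psi(l_1),\dots,\boldsymbol\psi(l_N))$; a run "$0,\dots,j$" with $j<0$ is empty. Shifts: $\widetilde F=F(n+1,m,\alpha,\beta)$, $\widehat F=F(n,m+1,\alpha,\beta)$, $\check F=F(n,m,\alpha-1,\beta)$, $\dot F=F(n,m,\alpha,\beta+1)$, composed as needed (e.g. $\widetilde{\dot{\check f}}=f(n+1,m,\alpha-1,\beta+1)$). *)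

theory Defs
  imports Complex_Main "Jordan_Normal_Form.Determinant"
begin

definition Gdisp :: "complex \<Rightarrow> complex \<Rightarrow> complex \<Rightarrow> complex \<Rightarrow> complex \<Rightarrow> complex" where
  "Gdisp a1 a2 a3 \<omega> k =
     \<omega>^4 - k^4 + a3 * (\<omega>^3 - k^3) + a2 * (\<omega>^2 - k^2) + a1 * (\<omega> - k)"

text \<open>Entry psi_s(n,m,alpha,beta,l); s is 0-based (s = 0..N-1 corresponds to k_1..k_N),
  j ranges over 1..4; w s j is omega_j(k_s), rho s j is rho^(0)_{j,s}.\<close>
definition psiGD :: "(nat \<Rightarrow> nat \<Rightarrow> complex) \<Rightarrow> (nat \<Rightarrow> nat \<Rightarrow> complex) \<Rightarrow>
    complex \<Rightarrow> complex \<Rightarrow> complex \<Rightarrow> complex \<Rightarrow> nat \<Rightarrow> int \<Rightarrow> int \<Rightarrow> int \<Rightarrow> int \<Rightarrow> nat \<Rightarrow> complex" where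
  "psiGD rho w p q a b s n m al be l =
     (\<Sum>j\<in>{1..4}. rho s j * (- w s j) ^ l * (p - w s j) powi n * (q - w s j) powi m
        * (a - w s j) powi al * (b - w s j) powi be)"

definition casor :: "(nat \<Rightarrow> nat \<Rightarrow> complex) \<Rightarrow> (nat \<Rightarrow> nat \<Rightarrow> complex) \<Rightarrow>
    complex \<Rightarrow> complex \<Rightarrow> complex \<Rightarrow> complex \<Rightarrow> nat \<Rightarrow> nat list \<Rightarrow> int \<Rightarrow> int \<Rightarrow> int \<Rightarrow> int \<Rightarrow> complex" where
  "casor rho w p q a b N ls n m al be =
     det (mat N N (\<lambda>(s, c). psiGD rho w p q a b s n m al be (ls ! c)))"

end

theory Submission
  imports Defs
begin

(* Shifting n, m, alpha, beta multiplies the functions behind the columns of a Casoratian by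
   p + z, q + z, a + z, b + z, so all Casoratians in the identities are |0,...,N-1| or
   |0,...,N-2,N| of functions T z * z^l, with T a product of such factors and each row a linear
   functional L_s of the function.  The minors D_i = |0,...,i-1,i+1,...,N| satisfy
   sum_i (-1)^i D_i L_r(T z^i) = 0 for every row r (a determinant with a repeated row).
   Expanding an N x N determinant along a variable last column therefore gives
   sum_i (-1)^i D_i det(A_0, ..., A_(N-2), S T z^i) = 0 whenever S acts on every row as a scalar.
   For S = 1, column operations evaluate this sum and give the three-term and the f-g identities.
   For S(z) = G(z, -b), which is constant on row s because every w_j(k_s) is a root of
   G(-w, -k_s), the partial fraction expansion of S over (p+z)(q+z)(a+z)(b+z) gives the last
   identity. *)

lemma det_add_scaled_previous_columns:
  fixes Z :: "nat \<Rightarrow> nat \<Rightarrow> 'a::comm_ring_1"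
  shows "det (mat n n (\<lambda>(i, j). if j = 0 then Z i 0 else c * Z i (j - 1) + Z i j))
       = det (mat n n (\<lambda>(i, j). Z i j))"
proof -
  define A where "A = mat n n (\<lambda>(i, j). Z i j)"
  define U :: "'a mat" where "U = mat n n (\<lambda>(i, j). if i = j then 1 else if Suc i = j then c else 0)"
  have "mat n n (\<lambda>(i, j). if j = 0 then Z i 0 else c * Z i (j - 1) + Z i j) = A * U"
  proof (rule eq_matI)
    fix i j assume "i < dim_row (A * U)" and "j < dim_col (A * U)"
    then have i: "i < n" and j: "j < n" by (auto simp: A_def U_def)
    have "(A * U) $$ (i, j)
        = (\<Sum>k<n. (if k = j then Z i k else 0) + (if Suc k = j then c * Z i k else 0))"
      using i j by (auto simp: A_def U_def scalar_prod_def lessThan_atLeast0 intro!: sum.cong)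
    also have "\<dots> = Z i j + (if j = 0 then 0 else c * Z i (j - 1))"
      using j by (cases j) (auto simp: sum.distrib)
    finally show "mat n n (\<lambda>(i, j). if j = 0 then Z i 0 else c * Z i (j - 1) + Z i j) $$ (i, j)
        = (A * U) $$ (i, j)"
      using i j by (simp add: add.commute)
  qed (auto simp: A_def U_def)
  moreover have "det U = 1"
    by (subst det_upper_triangular[of U n])
      (auto simp: U_def upper_triangular_def prod_list_diag_prod)
  moreover have "det (A * U) = det A * det U"
    by (rule det_mult) (auto simp: A_def U_def)
  ultimately show ?thesis
    by (simp add: A_def)
qed

lemma sum_atMost_split_last_two:
  "(n::nat) \<ge> 1 \<Longrightarrow> (\<Sum>i\<le>n. f i) = (\<Sum>i<n - 1. f i) + f (n - 1) + f n"
  by (cases n) (simp_all add: lessThan_Suc_atMost[symmetric])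

lemma power_int_shift:
  "(x :: 'a::division_ring) \<noteq> 0 \<Longrightarrow> n \<le> n' \<Longrightarrow> x powi n' = x powi n * x ^ nat (n' - n)"
  using power_int_add[of x n "n' - n"] power_int_of_nat[of x "nat (n' - n)"] by simp

lemma monic_cubic_interpolation:
  fixes e0 e1 e2 p q a z :: "'a::comm_ring_1"
  assumes H: "\<And>x. H x = x ^ 3 + e2 * x ^ 2 + e1 * x + e0"
  shows "H z * ((p - q) * (p - a) * (q - a))
      = (p + z) * (q + z) * (a + z) * ((p - q) * (p - a) * (q - a))
        + H (- p) * (q - a) * ((q + z) * (a + z)) - H (- q) * (p - a) * ((p + z) * (a + z))
        + H (- a) * (p - q) * ((p + z) * (q + z))"
    and "H (- p) * (q - a) - H (- q) * (p - a) + H (- a) * (p - q)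
      = (e2 - (p + q + a)) * ((p - q) * (p - a) * (q - a))"
  unfolding H by (simp_all add: algebra_simps power2_eq_square power3_eq_cube)

locale casoratian =
  fixes N :: nat and L :: "nat \<Rightarrow> ('a::comm_ring_1 \<Rightarrow> 'a) \<Rightarrow> 'a"
  assumes L_add: "L s (\<lambda>z. F z + G z) = L s F + L s G"
    and L_scale: "L s (\<lambda>z. c * F z) = c * L s F"
begin

lemma L_diff: "L s (\<lambda>z. F z - G z) = L s F - L s G"
  using L_add[of s F "\<lambda>z. - 1 * G z"] L_scale[of s "- 1" G] by simp

lemma L_shift:
  "L s (\<lambda>z. T z * (c + z) * z ^ j) = c * L s (\<lambda>z. T z * z ^ j) + L s (\<lambda>z. T z * z ^ Suc j)"
  using L_add[of s "\<lambda>z. c * (T z * z ^ j)"] L_scale[of s c] by (simp add: algebra_simps)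

definition cas_f :: "('a \<Rightarrow> 'a) \<Rightarrow> 'a" where
  "cas_f T = det (mat N N (\<lambda>(s, c). L s (\<lambda>z. T z * z ^ c)))"

definition cas_g :: "('a \<Rightarrow> 'a) \<Rightarrow> 'a" where
  "cas_g T = det (mat N N (\<lambda>(s, c). L s (\<lambda>z. T z * z ^ (if c = N - 1 then N else c))))"

definition cas_minor :: "('a \<Rightarrow> 'a) \<Rightarrow> nat \<Rightarrow> 'a" where
  "cas_minor T i = det (mat N N (\<lambda>(s, c). L s (\<lambda>z. T z * z ^ (if c < i then c else Suc c))))"

lemma cas_minor_N: "cas_minor T N = cas_f T"
  unfolding cas_minor_def cas_f_def by (intro arg_cong[where f = det] eq_matI) auto

lemma cas_minor_pred_N: "N \<ge> 1 \<Longrightarrow> cas_minor T (N - 1) = cas_g T"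
  unfolding cas_minor_def cas_g_def by (intro arg_cong[where f = det] eq_matI) auto

lemma cofactor_first_row_cas_minor:
  assumes "j < Suc N"
    and "\<And>i c. i < N \<Longrightarrow> c < Suc N \<Longrightarrow> Z (Suc i) c = L i (\<lambda>z. T z * z ^ c)"
  shows "cofactor (mat (Suc N) (Suc N) (\<lambda>(i, c). Z i c)) 0 j = (- 1) ^ j * cas_minor T j"
proof -
  have "mat_delete (mat (Suc N) (Suc N) (\<lambda>(i, c). Z i c)) 0 j
      = mat N N (\<lambda>(s, c). L s (\<lambda>z. T z * z ^ (if c < j then c else Suc c)))"
    using assms by (intro eq_matI) (auto simp: mat_delete_def insert_index_def)
  then show ?thesis by (simp add: cofactor_def cas_minor_def)
qed

lemma cas_minors_annihilate_rows:
  assumes "r < N"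
  shows "(\<Sum>i\<le>N. (- 1) ^ i * cas_minor T i * L r (\<lambda>z. T z * z ^ i)) = 0"
proof -
  define Z where "Z = mat (Suc N) (Suc N)
    (\<lambda>(i, c). if i = 0 then L r (\<lambda>z. T z * z ^ c) else L (i - 1) (\<lambda>z. T z * z ^ c))"
  have Z: "Z \<in> carrier_mat (Suc N) (Suc N)" by (simp add: Z_def)
  have "det Z = 0"
    by (rule det_identical_rows[OF Z, of 0 "Suc r"]) (use assms in \<open>auto simp: Z_def intro!: eq_vecI\<close>)
  moreover have "det Z = (\<Sum>j<Suc N. Z $$ (0, j) * cofactor Z 0 j)"
    by (rule laplace_expansion_row[OF Z]) simp
  moreover have "cofactor Z 0 j = (- 1) ^ j * cas_minor T j" if "j < Suc N" for j
    unfolding Z_def by (rule cofactor_first_row_cas_minor[OF that]) auto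
  ultimately show ?thesis
    by (simp add: Z_def lessThan_Suc_atMost mult_ac)
qed

lemma cas_f_shift_minor_expansion:
  "cas_f (\<lambda>z. T z * (c + z)) = (\<Sum>i\<le>N. (- 1) ^ i * cas_minor T i * (- c) ^ i)"
proof -
  define Z where "Z i j = (if i = 0 then (- c) ^ j else L (i - 1) (\<lambda>z. T z * z ^ j))" for i j
  define M where "M = mat (Suc N) (Suc N) (\<lambda>(i, j). Z i j)"
  define B where
    "B = mat (Suc N) (Suc N) (\<lambda>(i, j). if j = 0 then Z i 0 else c * Z i (j - 1) + Z i j)"
  have M: "M \<in> carrier_mat (Suc N) (Suc N)" and B: "B \<in> carrier_mat (Suc N) (Suc N)"
    by (simp_all add: M_def B_def)
  have "det M = (\<Sum>j<Suc N. M $$ (0, j) * cofactor M 0 j)"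
    by (rule laplace_expansion_row[OF M]) simp
  also have "\<dots> = (\<Sum>i\<le>N. (- 1) ^ i * cas_minor T i * (- c) ^ i)"
    unfolding lessThan_Suc_atMost[symmetric] M_def
    by (intro sum.cong refl, subst cofactor_first_row_cas_minor) (auto simp: Z_def)
  finally have det_M: "det M = (\<Sum>i\<le>N. (- 1) ^ i * cas_minor T i * (- c) ^ i)" .
  \<comment> \<open>the first row of \<open>B\<close> is \<open>(1, 0, \<dots>, 0)\<close>, since \<open>c (-c)^(j-1) + (-c)^j = 0\<close>\<close>
  have "det B = (\<Sum>j<Suc N. B $$ (0, j) * cofactor B 0 j)"
    by (rule laplace_expansion_row[OF B]) simp
  also have "\<dots> = (\<Sum>j<Suc N. if j = 0 then cofactor B 0 0 else 0)"
    by (intro sum.cong refl) (auto simp: B_def Z_def gr0_conv_Suc)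
  also have "\<dots> = cofactor B 0 0"
    by simp
  also have "\<dots> = cas_f (\<lambda>z. T z * (c + z))"
  proof -
    have "mat_delete B 0 0 = mat N N (\<lambda>(s, j). L s (\<lambda>z. T z * (c + z) * z ^ j))"
      by (intro eq_matI) (auto simp: mat_delete_def B_def Z_def insert_index_def L_shift)
    then show ?thesis by (simp add: cofactor_def cas_f_def)
  qed
  finally show ?thesis
    using det_M det_add_scaled_previous_columns[where n = "Suc N" and c = c and Z = Z]
    by (simp add: M_def B_def)
qed

definition last_col_det :: "(nat \<Rightarrow> 'a \<Rightarrow> 'a) \<Rightarrow> ('a \<Rightarrow> 'a) \<Rightarrow> 'a" where
  "last_col_det A F = det (mat N N (\<lambda>(s, j). L s (if j = N - 1 then F else A j)))"

lemma last_col_det_expansion: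
  assumes "N \<ge> 1"
  obtains w where "\<And>F. last_col_det A F = (\<Sum>r<N. w r * L r F)"
proof
  fix F
  define M where "M F = mat N N (\<lambda>(s, j). L s (if j = N - 1 then F else A j))" for F
  have "det (M F) = (\<Sum>r<N. M F $$ (r, N - 1) * cofactor (M F) r (N - 1))"
    by (rule laplace_expansion_column) (use assms in \<open>auto simp: M_def\<close>)
  moreover have "mat_delete (M F) r (N - 1) = mat_delete (M (\<lambda>_. 0)) r (N - 1)" for r
    by (intro eq_matI) (auto simp: M_def mat_delete_def insert_index_def)
  ultimately show "last_col_det A F = (\<Sum>r<N. cofactor (M (\<lambda>_. 0)) r (N - 1) * L r F)"
    by (auto simp: last_col_det_def M_def cofactor_def mult.commute intro!: sum.cong)
qed

lemma last_col_det_linear: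
  assumes "N \<ge> 1"
  shows "last_col_det A (\<lambda>z. F z + G z) = last_col_det A F + last_col_det A G"
    and "last_col_det A (\<lambda>z. c * F z) = c * last_col_det A F"
    and "last_col_det A (\<lambda>z. F z - G z) = last_col_det A F - last_col_det A G"
proof -
  obtain w where w: "\<And>F. last_col_det A F = (\<Sum>r<N. w r * L r F)"
    using last_col_det_expansion[OF assms] by blast
  show "last_col_det A (\<lambda>z. F z + G z) = last_col_det A F + last_col_det A G"
    unfolding w by (simp add: L_add distrib_left sum.distrib)
  show "last_col_det A (\<lambda>z. c * F z) = c * last_col_det A F"
    unfolding w by (simp add: L_scale sum_distrib_left mult_ac)
  show "last_col_det A (\<lambda>z. F z - G z) = last_col_det A F - last_col_det A G"
    unfolding w by (simp add: L_diff right_diff_distrib sum_subtractf)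
qed

lemma last_col_det_repeated_col:
  assumes "j + 2 \<le> N"
  shows "last_col_det A (A j) = 0"
  unfolding last_col_det_def
  by (rule det_identical_columns[of _ N j "N - 1"]) (use assms in auto)

lemma last_col_det_eq_cas_f:
  "(\<And>j. A j = (\<lambda>z. Q z * z ^ j)) \<Longrightarrow> last_col_det A (\<lambda>z. Q z * z ^ (N - 1)) = cas_f Q"
  unfolding last_col_det_def cas_f_def by (intro arg_cong[where f = det] eq_matI) auto

lemma last_col_det_eq_cas_g:
  "(\<And>j. A j = (\<lambda>z. Q z * z ^ j)) \<Longrightarrow> last_col_det A (\<lambda>z. Q z * z ^ N) = cas_g Q"
  unfolding last_col_det_def cas_g_def by (intro arg_cong[where f = det] eq_matI) auto

lemma last_col_det_rotate:
  assumes N: "N \<ge> 1" and A: "\<And>j. A j = (\<lambda>z. T z * (c + z) * z ^ j)"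
  shows "last_col_det A T = (- 1) ^ (N - 1) * cas_f T"
proof -
  define M where "M = mat N N (\<lambda>(s, j). L s (if j = N - 1 then T else A j))"
  have M: "M \<in> carrier_mat N N" by (simp add: M_def)
  have "L i (A (j - 1)) = c * L i (\<lambda>z. T z * z ^ (j - 1)) + L i (\<lambda>z. T z * z ^ j)"
    if "j > 0" for i j
    using L_shift[of i T c "j - 1"] that by (simp add: A)
  then have "swap_col_to_front M (N - 1) = mat N N (\<lambda>(i, j).
      if j = 0 then L i (\<lambda>z. T z * z ^ 0) else c * L i (\<lambda>z. T z * z ^ (j - 1)) + L i (\<lambda>z. T z * z ^ j))"
    using N by (subst swap_col_to_front_result[OF M]) (auto simp: M_def intro!: eq_matI)
  then have "det (swap_col_to_front M (N - 1)) = cas_f T"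
    using det_add_scaled_previous_columns[where n = N and c = c and Z = "\<lambda>i j. L i (\<lambda>z. T z * z ^ j)"]
    by (simp add: cas_f_def)
  moreover have "det (swap_col_to_front M (N - 1)) = (- 1) ^ (N - 1) * last_col_det A T"
    using swap_col_to_front_det[OF M] N by (simp add: M_def last_col_det_def)
  ultimately show ?thesis
    by (metis left_minus_one_mult_self)
qed

lemma last_col_det_powers:
  assumes N: "N \<ge> 1" and A: "\<And>j. A j = (\<lambda>z. M z * (c + z) * z ^ j)" and "i < N"
  shows "last_col_det A (\<lambda>z. M z * z ^ i) = (- c) ^ i * last_col_det A M"
  using \<open>i < N\<close>
proof (induction i)
  case (Suc i)
  have "last_col_det A (\<lambda>z. M z * z ^ Suc i) = last_col_det A (A i) - c * last_col_det A (\<lambda>z. M z * z ^ i)"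
    unfolding last_col_det_linear(2,3)[OF N, symmetric] A by (simp add: algebra_simps)
  also have "last_col_det A (A i) = 0"
    using Suc.prems by (intro last_col_det_repeated_col) simp
  finally show ?case
    using Suc by simp
qed simp

text \<open>The factor \<open>(-1)^(N-1)\<close> makes the evaluations \<open>minor_pairing_same\<close> and
  \<open>minor_pairing_factor\<close> sign-free.\<close>

definition minor_pairing :: "('a \<Rightarrow> 'a) \<Rightarrow> (nat \<Rightarrow> 'a \<Rightarrow> 'a) \<Rightarrow> ('a \<Rightarrow> 'a) \<Rightarrow> 'a" where
  "minor_pairing T A F =
    (- 1) ^ (N - 1) * (\<Sum>i\<le>N. (- 1) ^ i * cas_minor T i * last_col_det A (\<lambda>z. F z * z ^ i))"

lemma minor_pairing_linear:
  assumes "N \<ge> 1"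
  shows "minor_pairing T A (\<lambda>z. F z + G z) = minor_pairing T A F + minor_pairing T A G"
    and "minor_pairing T A (\<lambda>z. c * F z) = c * minor_pairing T A F"
    and "minor_pairing T A (\<lambda>z. F z - G z) = minor_pairing T A F - minor_pairing T A G"
  unfolding minor_pairing_def distrib_right left_diff_distrib mult.assoc
    last_col_det_linear[OF assms]
  by (simp_all add: algebra_simps sum.distrib sum_distrib_left sum_subtractf)

text \<open>Expanding \<open>last_col_det\<close> along its last column, the pairing becomes a combination of the
  sums in \<open>cas_minors_annihilate_rows\<close>, as long as \<open>S\<close> acts on every row as a scalar.\<close>

lemma minor_pairing_vanishes:
  assumes N: "N \<ge> 1" and S: "\<And>F s. s < N \<Longrightarrow> L s (\<lambda>z. S z * F z) = \<sigma> s * L s F"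
  shows "minor_pairing T A (\<lambda>z. S z * T z) = 0"
proof -
  obtain w where w: "\<And>F. last_col_det A F = (\<Sum>r<N. w r * L r F)"
    using last_col_det_expansion[OF N] by blast
  have "(\<Sum>i\<le>N. (- 1) ^ i * cas_minor T i * last_col_det A (\<lambda>z. S z * T z * z ^ i))
      = (\<Sum>i\<le>N. \<Sum>r<N. (- 1) ^ i * cas_minor T i * (w r * (\<sigma> r * L r (\<lambda>z. T z * z ^ i))))"
    unfolding w mult.assoc by (simp add: S sum_distrib_left)
  also have "\<dots> = (\<Sum>r<N. w r * \<sigma> r * (\<Sum>i\<le>N. (- 1) ^ i * cas_minor T i * L r (\<lambda>z. T z * z ^ i)))"
    by (subst sum.swap) (simp add: sum_distrib_left mult_ac)
  also have "\<dots> = 0"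
    by (simp add: cas_minors_annihilate_rows)
  finally show ?thesis
    by (simp add: minor_pairing_def)
qed

lemma minor_pairing_same:
  assumes N: "N \<ge> 1" and A: "\<And>j. A j = (\<lambda>z. Q z * z ^ j)"
  shows "minor_pairing T A Q = cas_g T * cas_f Q - cas_f T * cas_g Q"
proof -
  have "last_col_det A (\<lambda>z. Q z * z ^ i) = 0" if "i < N - 1" for i
    using last_col_det_repeated_col[of i A] that by (simp add: A)
  then have "(\<Sum>i\<le>N. (- 1) ^ i * cas_minor T i * last_col_det A (\<lambda>z. Q z * z ^ i))
      = (- 1) ^ (N - 1) * (cas_g T * cas_f Q - cas_f T * cas_g Q)"
    using N by (simp add: sum_atMost_split_last_two cas_minor_N
        cas_minor_pred_N[OF N, simplified] last_col_det_eq_cas_f[OF A, simplified]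
        last_col_det_eq_cas_g[OF A] power_minus_mult[of N "- 1", symmetric] algebra_simps)
  then show ?thesis
    by (simp add: minor_pairing_def)
qed

lemma minor_pairing_factor:
  assumes N: "N \<ge> 1" and A: "\<And>j. A j = (\<lambda>z. M z * (c + z) * z ^ j)"
  shows "minor_pairing T A M
    = cas_f (\<lambda>z. T z * (c + z)) * cas_f M - cas_f T * cas_f (\<lambda>z. M z * (c + z))"
proof -
  have top: "last_col_det A (\<lambda>z. M z * z ^ N)
      = cas_f (\<lambda>z. M z * (c + z)) + (- c) ^ N * last_col_det A M"
  proof -
    have "(\<lambda>z. M z * z ^ N) = (\<lambda>z. M z * (c + z) * z ^ (N - 1) - c * (M z * z ^ (N - 1)))"
      using N by (simp add: power_eq_if algebra_simps)
    then have "last_col_det A (\<lambda>z. M z * z ^ N)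
        = last_col_det A (\<lambda>z. M z * (c + z) * z ^ (N - 1)) - c * last_col_det A (\<lambda>z. M z * z ^ (N - 1))"
      by (simp add: last_col_det_linear[OF N])
    also have "last_col_det A (\<lambda>z. M z * (c + z) * z ^ (N - 1)) = cas_f (\<lambda>z. M z * (c + z))"
      by (rule last_col_det_eq_cas_f) (simp add: A)
    finally show ?thesis
      using last_col_det_powers[OF N A, of "N - 1"] N
      by (simp add: power_minus_mult[of N "- c", symmetric])
  qed
  have "{..N} = insert N {..<N}" by auto
  then have "(\<Sum>i\<le>N. (- 1) ^ i * cas_minor T i * last_col_det A (\<lambda>z. M z * z ^ i))
      = (\<Sum>i\<le>N. (- 1) ^ i * cas_minor T i * (- c) ^ i) * last_col_det A M
        + (- 1) ^ N * cas_minor T N * cas_f (\<lambda>z. M z * (c + z))"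
    by (simp add: top last_col_det_powers[OF N A] sum_distrib_left sum_distrib_right algebra_simps)
  also have "\<dots> = (- 1) ^ (N - 1)
      * (cas_f (\<lambda>z. T z * (c + z)) * cas_f M - cas_f T * cas_f (\<lambda>z. M z * (c + z)))"
    unfolding cas_f_shift_minor_expansion last_col_det_rotate[OF N A] cas_minor_N
    using N by (simp add: power_minus_mult[of N "- 1", symmetric] algebra_simps)
  finally show ?thesis
    by (simp add: minor_pairing_def)
qed

lemma minor_pairing_self:
  assumes "N \<ge> 1"
  shows "minor_pairing T A T = 0"
  using minor_pairing_vanishes[OF assms, of "\<lambda>_. 1" "\<lambda>_. 1" T A] by simp

lemma cas_three_term:
  assumes N: "N \<ge> 1"
  shows "(d - e) * cas_f (\<lambda>z. T z * (c + z)) * cas_f (\<lambda>z. T z * (e + z) * (d + z))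
    + (e - c) * cas_f (\<lambda>z. T z * (d + z)) * cas_f (\<lambda>z. T z * (e + z) * (c + z))
    + (c - d) * cas_f (\<lambda>z. T z * (e + z)) * cas_f (\<lambda>z. T z * (c + z) * (d + z)) = 0"
    (is "?lhs = 0")
proof -
  define A where "A j = (\<lambda>z. T z * (c + z) * (d + z) * z ^ j)" for j
  define P where "P F = minor_pairing (\<lambda>z. T z * (e + z)) A F" for F
  have "(c - d) * (e + z) = (e - d) * (c + z) - (e - c) * (d + z)" for z
    by (simp add: algebra_simps)
  then have split: "(c - d) * P (\<lambda>z. T z * (e + z))
      = (e - d) * P (\<lambda>z. T z * (c + z)) - (e - c) * P (\<lambda>z. T z * (d + z))"
    unfolding P_def minor_pairing_linear[OF N, symmetric] by (simp add: algebra_simps)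
  have Pc: "P (\<lambda>z. T z * (c + z))
      = cas_f (\<lambda>z. T z * (e + z) * (d + z)) * cas_f (\<lambda>z. T z * (c + z))
        - cas_f (\<lambda>z. T z * (e + z)) * cas_f (\<lambda>z. T z * (c + z) * (d + z))"
    unfolding P_def by (rule minor_pairing_factor[OF N]) (simp add: A_def)
  have "P (\<lambda>z. T z * (d + z))
      = cas_f (\<lambda>z. T z * (e + z) * (c + z)) * cas_f (\<lambda>z. T z * (d + z))
        - cas_f (\<lambda>z. T z * (e + z)) * cas_f (\<lambda>z. T z * (d + z) * (c + z))"
    unfolding P_def by (rule minor_pairing_factor[OF N]) (auto simp: A_def mult_ac)
  moreover have "(\<lambda>z. T z * (d + z) * (c + z)) = (\<lambda>z. T z * (c + z) * (d + z))"
    by (simp add: mult_ac)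
  ultimately have Pd: "P (\<lambda>z. T z * (d + z))
      = cas_f (\<lambda>z. T z * (e + z) * (c + z)) * cas_f (\<lambda>z. T z * (d + z))
        - cas_f (\<lambda>z. T z * (e + z)) * cas_f (\<lambda>z. T z * (c + z) * (d + z))"
    by simp
  have "?lhs = (e - c) * P (\<lambda>z. T z * (d + z)) - (e - d) * P (\<lambda>z. T z * (c + z))"
    unfolding Pc Pd by (simp add: algebra_simps)
  also have "\<dots> = - ((c - d) * P (\<lambda>z. T z * (e + z)))"
    unfolding split by simp
  also have "P (\<lambda>z. T z * (e + z)) = 0"
    unfolding P_def by (rule minor_pairing_self[OF N])
  finally show ?thesis
    by simp
qed

lemma cas_f_g_bilinear:
  assumes N: "N \<ge> 1"
  shows "cas_f (\<lambda>z. T z * (d + z)) * (d * cas_f (\<lambda>z. T z * (c + z)) + cas_g (\<lambda>z. T z * (c + z)))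
    + (c - d) * cas_f (\<lambda>z. T z * (d + z) * (c + z)) * cas_f T
    - (c * cas_f (\<lambda>z. T z * (d + z)) + cas_g (\<lambda>z. T z * (d + z))) * cas_f (\<lambda>z. T z * (c + z)) = 0"
    (is "?lhs = 0")
proof -
  define A where "A j = (\<lambda>z. T z * (c + z) * z ^ j)" for j
  define P where "P F = minor_pairing (\<lambda>z. T z * (d + z)) A F" for F
  have split: "P (\<lambda>z. T z * (d + z)) = P (\<lambda>z. T z * (c + z)) + (d - c) * P T"
    unfolding P_def minor_pairing_linear[OF N, symmetric] by (simp add: algebra_simps)
  have Pc: "P (\<lambda>z. T z * (c + z))
      = cas_g (\<lambda>z. T z * (d + z)) * cas_f (\<lambda>z. T z * (c + z))
        - cas_f (\<lambda>z. T z * (d + z)) * cas_g (\<lambda>z. T z * (c + z))"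
    unfolding P_def by (rule minor_pairing_same[OF N]) (simp add: A_def)
  have PT: "P T
      = cas_f (\<lambda>z. T z * (d + z) * (c + z)) * cas_f T
        - cas_f (\<lambda>z. T z * (d + z)) * cas_f (\<lambda>z. T z * (c + z))"
    unfolding P_def by (rule minor_pairing_factor[OF N]) (simp add: A_def)
  have "?lhs = - (P (\<lambda>z. T z * (c + z)) + (d - c) * P T)"
    unfolding Pc PT by (simp add: algebra_simps)
  also have "\<dots> = - P (\<lambda>z. T z * (d + z))"
    unfolding split ..
  also have "P (\<lambda>z. T z * (d + z)) = 0"
    unfolding P_def by (rule minor_pairing_self[OF N])
  finally show ?thesis
    by simp
qed

lemma cas_dispersion_bilinear:
  fixes p q a b \<beta>p \<beta>q \<beta>a :: 'a
  defines "PP \<equiv> \<lambda>z. (p + z) * (q + z) * (a + z) * (b + z)"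
  assumes N: "N \<ge> 1"
    and S: "\<And>F s. s < N \<Longrightarrow> L s (\<lambda>z. R z * F z) = \<sigma> s * L s F"
    and R: "\<And>z. R z = PP z + \<beta>p * ((q + z) * (a + z) * (b + z))
      + \<beta>q * ((p + z) * (a + z) * (b + z)) + \<beta>a * ((p + z) * (q + z) * (b + z))"
  shows "cas_g (\<lambda>_. 1) * cas_f PP - cas_f (\<lambda>_. 1) * cas_g PP
    + \<beta>p * cas_f (\<lambda>z. p + z) * cas_f (\<lambda>z. (q + z) * (a + z) * (b + z))
    + \<beta>q * cas_f (\<lambda>z. q + z) * cas_f (\<lambda>z. (p + z) * (a + z) * (b + z))
    + \<beta>a * cas_f (\<lambda>z. a + z) * cas_f (\<lambda>z. (p + z) * (q + z) * (b + z))
    - (\<beta>p + \<beta>q + \<beta>a) * cas_f (\<lambda>_. 1) * cas_f PP = 0"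
proof -
  define A where "A j = (\<lambda>z. PP z * z ^ j)" for j
  define P where "P F = minor_pairing (\<lambda>_. 1) A F" for F
  have factor: "P M = cas_f (\<lambda>z. c + z) * cas_f M - cas_f (\<lambda>_. 1) * cas_f PP"
    if "\<And>z. M z * (c + z) = PP z" for M c
  proof -
    have "P M = cas_f (\<lambda>z. 1 * (c + z)) * cas_f M - cas_f (\<lambda>_. 1) * cas_f (\<lambda>z. M z * (c + z))"
      unfolding P_def by (rule minor_pairing_factor[OF N]) (simp add: A_def that)
    then show ?thesis
      by (simp add: that)
  qed
  have "0 = P (\<lambda>z. R z * 1)"
    unfolding P_def by (rule minor_pairing_vanishes[OF N S, symmetric])
  also have "\<dots> = P PP + \<beta>p * P (\<lambda>z. (q + z) * (a + z) * (b + z))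
      + \<beta>q * P (\<lambda>z. (p + z) * (a + z) * (b + z)) + \<beta>a * P (\<lambda>z. (p + z) * (q + z) * (b + z))"
    unfolding P_def R minor_pairing_linear[OF N, symmetric] by simp
  also have "P PP = cas_g (\<lambda>_. 1) * cas_f PP - cas_f (\<lambda>_. 1) * cas_g PP"
    unfolding P_def by (rule minor_pairing_same[OF N]) (simp add: A_def)
  also have "P (\<lambda>z. (q + z) * (a + z) * (b + z))
      = cas_f (\<lambda>z. p + z) * cas_f (\<lambda>z. (q + z) * (a + z) * (b + z)) - cas_f (\<lambda>_. 1) * cas_f PP"
    by (rule factor) (simp add: PP_def mult_ac)
  also have "P (\<lambda>z. (p + z) * (a + z) * (b + z))
      = cas_f (\<lambda>z. q + z) * cas_f (\<lambda>z. (p + z) * (a + z) * (b + z)) - cas_f (\<lambda>_. 1) * cas_f PP"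
    by (rule factor) (simp add: PP_def mult_ac)
  also have "P (\<lambda>z. (p + z) * (q + z) * (b + z))
      = cas_f (\<lambda>z. a + z) * cas_f (\<lambda>z. (p + z) * (q + z) * (b + z)) - cas_f (\<lambda>_. 1) * cas_f PP"
    by (rule factor) (simp add: PP_def mult_ac)
  finally show ?thesis
    by (simp add: algebra_simps)
qed

end

lemma Gdisp_factor:
  "Gdisp a1 a2 a3 z (- b) = (b + z) *
     (z ^ 3 + (a3 - b) * z ^ 2 + (a2 - a3 * b + b ^ 2) * z + (a1 - a2 * b + a3 * b ^ 2 - b ^ 3))"
  unfolding Gdisp_def by (simp add: algebra_simps power2_eq_square power3_eq_cube power4_eq_xxxx)

lemma Gdisp_trans: "Gdisp a1 a2 a3 u v = Gdisp a1 a2 a3 u t + Gdisp a1 a2 a3 t v"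
  by (simp add: Gdisp_def algebra_simps)

lemma Gdisp_partial_fractions:
  fixes a1 a2 a3 p q a b z pb qb ab :: complex
  assumes "distinct [p, q, a, b]"
    and pb: "pb = Gdisp a1 a2 a3 (- p) (- b) / (p - b)"
    and qb: "qb = Gdisp a1 a2 a3 (- q) (- b) / (q - b)"
    and ab: "ab = Gdisp a1 a2 a3 (- a) (- b) / (a - b)"
  defines "\<beta>p \<equiv> - pb / ((p - q) * (p - a))" and "\<beta>q \<equiv> qb / ((p - q) * (q - a))"
    and "\<beta>a \<equiv> - ab / ((p - a) * (q - a))"
  shows "Gdisp a1 a2 a3 z (- b) = (p + z) * (q + z) * (a + z) * (b + z)
      + \<beta>p * ((q + z) * (a + z) * (b + z)) + \<beta>q * ((p + z) * (a + z) * (b + z))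
      + \<beta>a * ((p + z) * (q + z) * (b + z))"
    and "\<beta>p + \<beta>q + \<beta>a = a3 - (p + q + a + b)"
proof -
  \<comment> \<open>\<open>Gdisp z (-b) = (b + z) H z\<close> with a monic cubic \<open>H\<close>, interpolated at \<open>-p, -q, -a\<close>\<close>
  define H where
    "H x = x ^ 3 + (a3 - b) * x ^ 2 + (a2 - a3 * b + b ^ 2) * x + (a1 - a2 * b + a3 * b ^ 2 - b ^ 3)"
    for x
  have G: "Gdisp a1 a2 a3 x (- b) = (b + x) * H x" for x
    by (simp add: Gdisp_factor H_def)
  have quot: "Gdisp a1 a2 a3 (- c) (- b) / (c - b) = - H (- c)" if "c \<noteq> b" for c
    using that by (simp add: G field_simps)
  define d where "d = (p - q) * (p - a) * (q - a)"
  have nz: "p - q \<noteq> 0" "p - a \<noteq> 0" "q - a \<noteq> 0" "d \<noteq> 0"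
    using assms(1) by (auto simp: d_def)
  have \<beta>p: "\<beta>p * d = H (- p) * (q - a)"
    using assms(1) nz by (simp add: \<beta>p_def pb quot d_def)
  have \<beta>q: "\<beta>q * d = - H (- q) * (p - a)"
    using assms(1) nz by (simp add: \<beta>q_def qb quot d_def)
  have \<beta>a: "\<beta>a * d = H (- a) * (p - q)"
    using assms(1) nz by (simp add: \<beta>a_def ab quot d_def)
  note interpolation =
    monic_cubic_interpolation[where p = p and q = q and a = a, OF H_def, folded d_def]
  have "((p + z) * (q + z) * (a + z) + \<beta>p * ((q + z) * (a + z)) + \<beta>q * ((p + z) * (a + z))
        + \<beta>a * ((p + z) * (q + z))) * d
      = (p + z) * (q + z) * (a + z) * d + (\<beta>p * d) * ((q + z) * (a + z))
        + (\<beta>q * d) * ((p + z) * (a + z)) + (\<beta>a * d) * ((p + z) * (q + z))"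
    by (simp add: algebra_simps)
  also have "\<dots> = H z * d"
    unfolding \<beta>p \<beta>q \<beta>a interpolation(1) by simp
  finally have "H z = (p + z) * (q + z) * (a + z) + \<beta>p * ((q + z) * (a + z))
      + \<beta>q * ((p + z) * (a + z)) + \<beta>a * ((p + z) * (q + z))"
    using nz(4) by simp
  then show "Gdisp a1 a2 a3 z (- b) = (p + z) * (q + z) * (a + z) * (b + z)
      + \<beta>p * ((q + z) * (a + z) * (b + z)) + \<beta>q * ((p + z) * (a + z) * (b + z))
      + \<beta>a * ((p + z) * (q + z) * (b + z))"
    by (simp add: G algebra_simps)
  have "(\<beta>p + \<beta>q + \<beta>a) * d = (a3 - (p + q + a + b)) * d"
    unfolding distrib_right \<beta>p \<beta>q \<beta>a using interpolation(2) by (simp add: algebra_simps)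
  then show "\<beta>p + \<beta>q + \<beta>a = a3 - (p + q + a + b)"
    using nz(4) by simp
qed

text \<open>\<open>psiGD \<dots> s n m al be l\<close> is \<open>psi_row \<dots> n m al be s\<close> applied to \<open>z ^ l\<close>: the
  factor \<open>(-\<omega>\<^sub>j)^l\<close> becomes \<open>F (-\<omega>\<^sub>j)\<close>, so shifts of \<open>n, m, al, be\<close> become
  multiplication of \<open>F\<close> by \<open>p + z, q + z, a + z, b + z\<close>.\<close>

definition psi_row :: "(nat \<Rightarrow> nat \<Rightarrow> complex) \<Rightarrow> (nat \<Rightarrow> nat \<Rightarrow> complex) \<Rightarrow>
    complex \<Rightarrow> complex \<Rightarrow> complex \<Rightarrow> complex \<Rightarrow> int \<Rightarrow> int \<Rightarrow> int \<Rightarrow> int \<Rightarrow>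
    nat \<Rightarrow> (complex \<Rightarrow> complex) \<Rightarrow> complex" where
  "psi_row rho w p q a b n m al be s F =
     (\<Sum>j\<in>{1..4}. rho s j * (p - w s j) powi n * (q - w s j) powi m * (a - w s j) powi al
        * (b - w s j) powi be * F (- w s j))"

lemma casoratian_psi_row: "casoratian (psi_row rho w p q a b n m al be)"
  by unfold_locales (simp_all add: psi_row_def algebra_simps sum.distrib sum_distrib_left)

lemma psiGD_shift:
  assumes "\<And>j. j \<in> {1..4} \<Longrightarrow> p \<noteq> w s j \<and> q \<noteq> w s j \<and> a \<noteq> w s j \<and> b \<noteq> w s j"
    and "n \<le> n'" "m \<le> m'" "al \<le> al'" "be \<le> be'"
  shows "psiGD rho w p q a b s n' m' al' be' e = psi_row rho w p q a b n m al be s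
      (\<lambda>z. (p + z) ^ nat (n' - n) * (q + z) ^ nat (m' - m) * (a + z) ^ nat (al' - al)
        * (b + z) ^ nat (be' - be) * z ^ e)"
  unfolding psiGD_def psi_row_def
  by (intro sum.cong refl) (use assms in \<open>auto simp: power_int_shift mult_ac\<close>)

lemma casor_shift:
  assumes "\<And>s j. s < N \<Longrightarrow> j \<in> {1..4} \<Longrightarrow>
      p \<noteq> w s j \<and> q \<noteq> w s j \<and> a \<noteq> w s j \<and> b \<noteq> w s j"
    and "n \<le> n'" "m \<le> m'" "al \<le> al'" "be \<le> be'"
  shows "casor rho w p q a b N ls n' m' al' be' = det (mat N N (\<lambda>(s, c).
      psi_row rho w p q a b n m al be s (\<lambda>z. (p + z) ^ nat (n' - n) * (q + z) ^ nat (m' - m)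
        * (a + z) ^ nat (al' - al) * (b + z) ^ nat (be' - be) * z ^ (ls ! c))))"
proof -
  have "psiGD rho w p q a b s n' m' al' be' e = psi_row rho w p q a b n m al be s
      (\<lambda>z. (p + z) ^ nat (n' - n) * (q + z) ^ nat (m' - m) * (a + z) ^ nat (al' - al)
        * (b + z) ^ nat (be' - be) * z ^ e)" if "s < N" for s e
    by (rule psiGD_shift) (use assms that in auto)
  then show ?thesis
    unfolding casor_def by (intro arg_cong[where f = det] eq_matI) auto
qed

lemma casor_eq_cas_f:
  assumes "\<And>s j. s < N \<Longrightarrow> j \<in> {1..4} \<Longrightarrow>
      p \<noteq> w s j \<and> q \<noteq> w s j \<and> a \<noteq> w s j \<and> b \<noteq> w s j"
    and "n \<le> n'" "m \<le> m'" "al \<le> al'" "be \<le> be'"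
  shows "casor rho w p q a b N [0..<N] n' m' al' be'
    = casoratian.cas_f N (psi_row rho w p q a b n m al be) (\<lambda>z. (p + z) ^ nat (n' - n)
        * (q + z) ^ nat (m' - m) * (a + z) ^ nat (al' - al) * (b + z) ^ nat (be' - be))"
  using assms unfolding casoratian.cas_f_def[OF casoratian_psi_row]
  by (subst casor_shift) (auto intro!: arg_cong[where f = det] eq_matI)

lemma casor_eq_cas_g:
  assumes "\<And>s j. s < N \<Longrightarrow> j \<in> {1..4} \<Longrightarrow>
      p \<noteq> w s j \<and> q \<noteq> w s j \<and> a \<noteq> w s j \<and> b \<noteq> w s j"
    and "n \<le> n'" "m \<le> m'" "al \<le> al'" "be \<le> be'"
  shows "casor rho w p q a b N ([0..<N - 1] @ [N]) n' m' al' be'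
    = casoratian.cas_g N (psi_row rho w p q a b n m al be) (\<lambda>z. (p + z) ^ nat (n' - n)
        * (q + z) ^ nat (m' - m) * (a + z) ^ nat (al' - al) * (b + z) ^ nat (be' - be))"
  using assms unfolding casoratian.cas_g_def[OF casoratian_psi_row]
  by (subst casor_shift) (auto simp: nth_append intro!: arg_cong[where f = det] eq_matI)

lemma psi_row_scalar:
  assumes "\<And>j. j \<in> {1..4} \<Longrightarrow> S (- w s j) = \<sigma>"
  shows "psi_row rho w p q a b n m al be s (\<lambda>z. S z * F z) = \<sigma> * psi_row rho w p q a b n m al be s F"
  unfolding psi_row_def sum_distrib_left by (intro sum.cong refl) (simp add: assms mult_ac)

lemma psi_row_Gdisp_scalar:
  assumes "\<And>\<omega>. Gdisp a1 a2 a3 (- \<omega>) (- k) = (\<Prod>j\<in>{1..4}. (\<omega> - w s j))"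
  shows "psi_row rho w p q a b n m al be s (\<lambda>z. Gdisp a1 a2 a3 z c * F z)
    = Gdisp a1 a2 a3 (- k) c * psi_row rho w p q a b n m al be s F"
proof (rule psi_row_scalar)
  fix j :: nat assume "j \<in> {1..4}"
  then have "Gdisp a1 a2 a3 (- w s j) (- k) = 0"
    using assms[of "w s j"] by auto
  then show "Gdisp a1 a2 a3 (- w s j) c = Gdisp a1 a2 a3 (- k) c"
    using Gdisp_trans[of a1 a2 a3 "- w s j" c "- k"] by simp
qed

theorem theorem5p1:
  fixes a1 a2 a3 p q a b :: complex
    and N :: nat
    and k :: "nat \<Rightarrow> complex"
    and w rho :: "nat \<Rightarrow> nat \<Rightarrow> complex"
    and f g :: "int \<Rightarrow> int \<Rightarrow> int \<Rightarrow> int \<Rightarrow> complex"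
    and pb qb ab :: complex
    and n m al be :: int
  assumes N: "N \<ge> 1"
    and distinct: "distinct [p, q, a, b]"
    and roots: "\<And>s \<omega>. s < N \<Longrightarrow> Gdisp a1 a2 a3 (-\<omega>) (- k s) = (\<Prod>j\<in>{1..4}. (\<omega> - w s j))"
    and w4: "\<And>s. s < N \<Longrightarrow> w s 4 = k s"
    and nonzero: "\<And>s j. s < N \<Longrightarrow> j \<in> {1..4} \<Longrightarrow>
        p \<noteq> w s j \<and> q \<noteq> w s j \<and> a \<noteq> w s j \<and> b \<noteq> w s j"
    and pb_def: "pb = Gdisp a1 a2 a3 (-p) (-b) / (p - b)"
    and qb_def: "qb = Gdisp a1 a2 a3 (-q) (-b) / (q - b)"
    and ab_def: "ab = Gdisp a1 a2 a3 (-a) (-b) / (a - b)"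
    and f_def: "f = casor rho w p q a b N [0..<N]"
    and g_def: "g = casor rho w p q a b N ([0..<N - 1] @ [N])"
  shows
   "(p - a) * f (n+1) m al be * f n m (al-1) (be+1) - (p - b) * f n m al be * f (n+1) m (al-1) (be+1)
      - (b - a) * f n m al (be+1) * f (n+1) m (al-1) be = 0
  \<and> (q - a) * f n (m+1) al be * f n m (al-1) (be+1) - (q - b) * f n m al be * f n (m+1) (al-1) (be+1)
      - (b - a) * f n m al (be+1) * f n (m+1) (al-1) be = 0
  \<and> f n m al be * (a * f (n+1) m (al-1) be + g (n+1) m (al-1) be)
      + (p - a) * f (n+1) m al be * f n m (al-1) be
      - (p * f n m al be + g n m al be) * f (n+1) m (al-1) be = 0
  \<and> f n m al be * (a * f n (m+1) (al-1) be + g n (m+1) (al-1) be)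
      + (q - a) * f n (m+1) al be * f n m (al-1) be
      - (q * f n m al be + g n m al be) * f n (m+1) (al-1) be = 0
  \<and> f (n+1) m al be * (p * f n m al (be+1) + g n m al (be+1))
      - (p - b) * f n m al be * f (n+1) m al (be+1)
      - (b * f (n+1) m al be + g (n+1) m al be) * f n m al (be+1) = 0
  \<and> f n (m+1) al be * (q * f n m al (be+1) + g n m al (be+1))
      - (q - b) * f n m al be * f n (m+1) al (be+1)
      - (b * f n (m+1) al be + g n (m+1) al be) * f n m al (be+1) = 0
  \<and> (p - b) * f (n+1) m al (be+1) * f n (m+1) al be - (q - b) * f n (m+1) al (be+1) * f (n+1) m al be
      - (p - q) * f (n+1) (m+1) al be * f n m al (be+1) = 0
  \<and> (a * f n m (al-1) be + g n m (al-1) be) * f (n+1) (m+1) al (be+1)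
      - f n m (al-1) be * (g (n+1) (m+1) al (be+1) - b * f (n+1) (m+1) al (be+1))
      - pb * f n (m+1) al (be+1) * f (n+1) m (al-1) be / ((p - q) * (p - a))
      + qb * f (n+1) m al (be+1) * f n (m+1) (al-1) be / ((p - q) * (q - a))
      + (p + q - a3) * f n m (al-1) be * f (n+1) (m+1) al (be+1)
      - ab / ((p - a) * (q - a)) * f n m al be * f (n+1) (m+1) (al-1) (be+1) = 0"
proof -
  \<comment> \<open>every Casoratian in the identities is a shift of the one at \<open>(n, m, al - 1, be)\<close>\<close>
  define L where "L = psi_row rho w p q a b n m (al - 1) be"
  interpret casoratian N L
    unfolding L_def by (rule casoratian_psi_row)
  have f: "f n' m' al' be' = cas_f (\<lambda>z. (p + z) ^ nat (n' - n) * (q + z) ^ nat (m' - m)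
      * (a + z) ^ nat (al' - (al - 1)) * (b + z) ^ nat (be' - be))"
    if "n \<le> n'" "m \<le> m'" "al - 1 \<le> al'" "be \<le> be'" for n' m' al' be'
    unfolding f_def L_def by (rule casor_eq_cas_f) (use nonzero that in auto)
  have g: "g n' m' al' be' = cas_g (\<lambda>z. (p + z) ^ nat (n' - n) * (q + z) ^ nat (m' - m)
      * (a + z) ^ nat (al' - (al - 1)) * (b + z) ^ nat (be' - be))"
    if "n \<le> n'" "m \<le> m'" "al - 1 \<le> al'" "be \<le> be'" for n' m' al' be'
    unfolding g_def L_def by (rule casor_eq_cas_g) (use nonzero that in auto)
  have scalar: "L s (\<lambda>z. Gdisp a1 a2 a3 z (- b) * F z) = Gdisp a1 a2 a3 (- k s) (- b) * L s F"
    if "s < N" for s F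
    unfolding L_def using roots[OF that] by (rule psi_row_Gdisp_scalar)
  define \<beta>p \<beta>q \<beta>a where "\<beta>p = - pb / ((p - q) * (p - a))" and "\<beta>q = qb / ((p - q) * (q - a))"
    and "\<beta>a = - ab / ((p - a) * (q - a))"
  note partial_fractions =
    Gdisp_partial_fractions[OF distinct pb_def qb_def ab_def, folded \<beta>p_def \<beta>q_def \<beta>a_def]
  have \<beta>: "pb * x * y / ((p - q) * (p - a)) = - (\<beta>p * x * y)"
    "qb * x * y / ((p - q) * (q - a)) = \<beta>q * x * y"
    "ab / ((p - a) * (q - a)) * x * y = - (\<beta>a * x * y)" for x y
    by (simp_all add: \<beta>p_def \<beta>q_def \<beta>a_def)
  have \<beta>a_eq: "\<beta>a = a3 - (p + q + a + b) - \<beta>p - \<beta>q"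
    using partial_fractions(2) by (simp add: algebra_simps)
  show ?thesis
    unfolding \<beta>
    using cas_three_term[OF N, where T = "\<lambda>_. 1" and c = p and d = a and e = b]
      cas_three_term[OF N, where T = "\<lambda>_. 1" and c = q and d = a and e = b]
      cas_f_g_bilinear[OF N, where T = "\<lambda>_. 1" and c = p and d = a]
      cas_f_g_bilinear[OF N, where T = "\<lambda>_. 1" and c = q and d = a]
      cas_f_g_bilinear[OF N, where T = "\<lambda>z. a + z" and c = b and d = p]
      cas_f_g_bilinear[OF N, where T = "\<lambda>z. a + z" and c = b and d = q]
      cas_three_term[OF N, where T = "\<lambda>z. a + z" and c = p and d = b and e = q]
      cas_dispersion_bilinear[OF N scalar partial_fractions(1)]
    by (intro conjI; simp add: f g \<beta>a_eq algebra_simps)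
qed

end
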